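(* Let $J_j(x)=\tfrac{c_j}{2}x^2+\bar c_jx$ with $c_j>0$, and let $\rho\in(0,\,4\min_jc_j)$. Consider the system in the variables $z=(\hat q,\tilde\theta)\in\mathbb{R}^n\times\mathbb{R}^{|\mathcal E|}$ and $\sigma=(\lambda,\omega,\alpha,\eta)\in\mathbb{R}\times\mathbb{R}^n\times\mathbb{R}^n\times\mathbb{R}^{2|\mathcal E|}$, with $\pi:=\lambda\mathbf 1-H\eta-\omega$ and $q:=\tfrac1\rho(\pi-\alpha)+\hat q$: \[ \dot{\tilde\theta}=C^T\omega,\qquad M\dot\omega=q-d-D\omega-CB\tilde\theta, \] \[ \tau^\alpha_j\dot\alpha_j=q_j-\frac{\pi_j-\bar c_j}{c_j}\ (j=1,\dots,n),\qquad T^{\hat q}\dot{\hat q}=\pi-\alpha, \] \[ T^\lambda\dot\lambda=-\mathbf 1^T(q-d),\qquad T^\eta\dot\eta=\big[H^T(q-d)-F\big]^+_\eta . \] Let $\mathbb I=\{(z,\sigma):\eta\ge0\}$ and let $\mathbb E$ be the set of equilibrium points of this system, assumed nonempty. Then $\mathbb E$ is globally asymptotically stable on $\mathbb I$; in particular, every trajectory $(z(t),\sigma(t))$ starting in $\mathbb I$ remains bounded for $t\ge0$ and converges, as $t\to\infty$, to a single equilibrium point $(z^*,\sigma^* )\in\mathbb E$.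
   Context: $(\mathcal N,\mathcal E)$ is a connected directed graph with $\mathcal N=\{1,\dots,n\}$; $C$ is its incidence matrix ($C_{j,e}=1$ if $e=(j,k)$, $-1$ if $e=(k,j)$, $0$ otherwise). $B$, $D$, $M$ are diagonal with positive diagonal entries; $T^{\hat q},T^\lambda,T^\eta$ are diagonal (or positive scalar) with positive entries, and $\tau^\alpha_j>0$. $L:=CBC^T$, $H\in\mathbb{R}^{n\times2|\mathcal E|}$ with $H^T=\begin{bmatrix} BC^TL^\dagger\\ -BC^TL^\dagger\end{bmatrix}$ ($L^\dagger$ Moore–Penrose inverse), $F=\begin{bmatrix}\overline F\\-\underline F\end{bmatrix}$, $d\in\mathbb{R}^n$ given. Projection: for vectors $y,u$, $([y]^+_u)_e=y_e$ if $y_e>0$ or $u_e>0$, and $0$ otherwise; it keeps $\eta(t)\ge0$ when $\eta(0)\ge0$. Solutions are understood in the Carathéodory sense. *)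

theory Defs
  imports "HOL-Analysis.Analysis"
begin

text \<open>Directed graph: nodes are the elements of the finite type 'n, edges the elements
  of the finite type 'e; edge e goes from src e to tgt e.\<close>

definition digraph_ok :: "('e::finite \<Rightarrow> 'n::finite) \<Rightarrow> ('e \<Rightarrow> 'n) \<Rightarrow> bool" where
  "digraph_ok src tgt \<longleftrightarrow>
     (\<forall>e. src e \<noteq> tgt e) \<and> inj (\<lambda>e. (src e, tgt e))"

definition graph_connected :: "('e::finite \<Rightarrow> 'n::finite) \<Rightarrow> ('e \<Rightarrow> 'n) \<Rightarrow> bool" where
  "graph_connected src tgt \<longleftrightarrow>
     (\<forall>j k. (j, k) \<in> ({(src e, tgt e) | e. True} \<union> {(tgt e, src e) | e. True})\<^sup>*)"

definition incidence :: "('e::finite \<Rightarrow> 'n::finite) \<Rightarrow> ('e \<Rightarrow> 'n) \<Rightarrow> real^'e^'n" where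
  "incidence src tgt = (\<chi> j e. if j = src e then 1 else if j = tgt e then -1 else 0)"

definition pos_diag :: "real^'a::finite^'a \<Rightarrow> bool" where
  "pos_diag A \<longleftrightarrow> (\<forall>i j. i \<noteq> j \<longrightarrow> A $ i $ j = 0) \<and> (\<forall>i. A $ i $ i > 0)"

definition mp_inverse :: "real^'m::finite^'n::finite \<Rightarrow> real^'n^'m" where
  "mp_inverse A = (THE X. A ** X ** A = A \<and> X ** A ** X = X \<and>
                          transpose (A ** X) = A ** X \<and> transpose (X ** A) = X ** A)"

text \<open>H with H^T = [B C^T L^+ ; - B C^T L^+], L = C B C^T.\<close>
definition Hmat :: "real^'e::finite^'n::finite \<Rightarrow> real^'e^'e \<Rightarrow> real^('e + 'e)^'n" where
  "Hmat C B = (let P = B ** transpose C ** mp_inverse (C ** B ** transpose C) in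
     (\<chi> j i. case i of Inl e \<Rightarrow> P $ e $ j | Inr e \<Rightarrow> - (P $ e $ j)))"

definition Fvec :: "real^'e::finite \<Rightarrow> real^'e \<Rightarrow> real^('e + 'e)" where
  "Fvec Fup Flow = (\<chi> i. case i of Inl e \<Rightarrow> Fup $ e | Inr e \<Rightarrow> - (Flow $ e))"

definition proj_plus :: "real^'a::finite \<Rightarrow> real^'a \<Rightarrow> real^'a" where
  "proj_plus y u = (\<chi> e. if y $ e > 0 \<or> u $ e > 0 then y $ e else 0)"

text \<open>State (qhat, theta, lambda, omega, alpha, eta).\<close>
type_synonym ('n, 'e) state =
  "(real^'n) \<times> (real^'e) \<times> real \<times> (real^'n) \<times> (real^'n) \<times> (real^('e + 'e))"

text \<open>Left-hand weight operator K: the system reads K (x') = f x.\<close>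
definition Kop :: "real^'n::finite^'n \<Rightarrow> real \<Rightarrow> real^'n^'n \<Rightarrow> real^'n \<Rightarrow> real^('e::finite + 'e)^('e + 'e)
    \<Rightarrow> ('n, 'e) state \<Rightarrow> ('n, 'e) state" where
  "Kop Tq Tl M tau Teta = (\<lambda>(qh, th, l, om, al, et).
     (Tq *v qh, th, Tl * l, M *v om, (\<chi> j. tau $ j * al $ j), Teta *v et))"

definition rhs :: "('e::finite \<Rightarrow> 'n::finite) \<Rightarrow> ('e \<Rightarrow> 'n) \<Rightarrow> real^'e^'e \<Rightarrow> real^'n^'n
    \<Rightarrow> real^'n \<Rightarrow> real^'n \<Rightarrow> real \<Rightarrow> real^'n \<Rightarrow> real^'e \<Rightarrow> real^'e
    \<Rightarrow> ('n, 'e) state \<Rightarrow> ('n, 'e) state" where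
  "rhs src tgt B D c cbar \<rho> d Fup Flow = (\<lambda>(qh, th, l, om, al, et).
     (let C = incidence src tgt; H = Hmat C B; F = Fvec Fup Flow;
          \<pi> = (\<chi> j. l) - H *v et - om;
          q = (1 / \<rho>) *\<^sub>R (\<pi> - al) + qh
      in (\<pi> - al,
          transpose C *v om,
          - (\<Sum>j\<in>UNIV. (q - d) $ j),
          q - d - D *v om - C *v (B *v th),
          (\<chi> j. q $ j - (\<pi> $ j - cbar $ j) / c $ j),
          proj_plus (transpose H *v (q - d) - F) et)))"

text \<open>Caratheodory solution on [0,inf) of K x' = f x: x is locally absolutely continuous
  with K x'(t) = f(x(t)) for a.e. t >= 0, written in the equivalent integral form
  (K linear and invertible).\<close>
definition cara_sol :: "('a::euclidean_space \<Rightarrow> 'a) \<Rightarrow> ('a \<Rightarrow> 'a) \<Rightarrow> (real \<Rightarrow> 'a) \<Rightarrow> bool" where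
  "cara_sol K f x \<longleftrightarrow>
     (\<forall>t\<ge>0. (\<lambda>s. f (x s)) absolutely_integrable_on {0..t} \<and>
             K (x t) - K (x 0) = integral {0..t} (\<lambda>s. f (x s)))"

definition Iset :: "('n::finite, 'e::finite) state set" where
  "Iset = {(qh, th, l, om, al, et). \<forall>i. et $ i \<ge> 0}"

end

theory Submission
  imports Defs
begin

text \<open>
  For an equilibrium \<open>p\<close> let \<open>P\<close> be the diagonal weight \<open>diag(T\<^sup>q, B, T\<^sup>\<lambda>, M, \<tau>, T\<^sup>\<eta>)\<close>; the
  quadratic function \<open>V\<^sub>p(z) = (z - p)\<^sup>T P (z - p) / 2\<close> decreases along trajectories in \<open>I\<close> at
  rate at least \<open>W\<^sub>p(z)\<close>, a positive definite form in the deviations of \<open>\<pi>\<close>, \<open>\<alpha>\<close> and \<open>\<omega>\<close>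
  (positivity is exactly the condition \<open>\<rho> < 4 min c\<^sub>j\<close>). This gives Lyapunov stability and
  boundedness. By Barbalat's lemma \<open>W\<^sub>p(x(t)) \<rightarrow> 0\<close>, and then also the time derivatives of
  \<open>\<alpha>\<close> and \<open>\<omega>\<close> tend to zero.
  Hence every limit point of a trajectory agrees with \<open>p\<close> in \<open>\<pi>\<close>, \<open>\<alpha>\<close>, \<open>\<omega>\<close> and \<open>q\<close>, and its
  \<open>\<eta>\<close>-components vanish wherever \<open>H\<^sup>T(q - d) - F\<close> is negative at \<open>p\<close>, so it is an equilibrium
  itself; using it as the centre of the Lyapunov function shows that the whole trajectory
  converges to it.
\<close>

section \<open>Real analysis\<close>

lemma quadratic_increment_bound_imp_le:
  fixes \<phi> :: "real \<Rightarrow> real"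
  assumes ab: "a \<le> b" and C: "C \<ge> 0"
    and step: "\<And>t h. a \<le> t \<Longrightarrow> 0 \<le> h \<Longrightarrow> t + h \<le> b \<Longrightarrow> \<phi> (t + h) - \<phi> t \<le> C * h\<^sup>2"
  shows "\<phi> b \<le> \<phi> a"
proof (rule ccontr)
  assume "\<not> \<phi> b \<le> \<phi> a"
  hence gap: "\<phi> b - \<phi> a > 0" by simp
  obtain N :: nat where N: "real N > C * (b - a)\<^sup>2 / (\<phi> b - \<phi> a)"
    using reals_Archimedean2 by blast
  have "C * (b - a)\<^sup>2 / (\<phi> b - \<phi> a) \<ge> 0" using C gap by simp
  hence Npos: "N > 0" using N by linarith
  define h where "h = (b - a) / N"
  have h0: "h \<ge> 0" using ab Npos by (simp add: h_def)
  have partial: "\<phi> (a + k * h) \<le> \<phi> a + k * C * h\<^sup>2" if "k \<le> N" for k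
    using that
  proof (induction k)
    case 0 then show ?case by simp
  next
    case (Suc k)
    have "real (Suc k) * h \<le> N * h" using Suc.prems h0 by (intro mult_right_mono) auto
    also have "N * h = b - a" using Npos by (simp add: h_def)
    finally have "\<phi> (a + k * h + h) - \<phi> (a + k * h) \<le> C * h\<^sup>2"
      using h0 by (intro step) (auto simp: algebra_simps)
    then show ?case using Suc by (simp add: algebra_simps)
  qed
  have "\<phi> b \<le> \<phi> a + N * C * h\<^sup>2" using partial[of N] Npos by (simp add: h_def)
  also have "N * C * h\<^sup>2 = C * (b - a)\<^sup>2 / N"
    using Npos by (simp add: h_def power2_eq_square field_simps)
  finally have "real N * (\<phi> b - \<phi> a) \<le> C * (b - a)\<^sup>2" using Npos by (simp add: field_simps)
  moreover have "C * (b - a)\<^sup>2 < real N * (\<phi> b - \<phi> a)" using N gap by (simp add: field_simps)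
  ultimately show False by simp
qed

lemma norm_integral_le_length:
  fixes g :: "real \<Rightarrow> 'a::euclidean_space"
  assumes "g integrable_on {s..t}" "s \<le> t" "\<And>r. r \<in> {s..t} \<Longrightarrow> norm (g r) \<le> G"
  shows "norm (integral {s..t} g) \<le> G * (t - s)"
proof -
  have "norm (integral {s..t} g) \<le> integral {s..t} (\<lambda>_. G)"
    by (rule integral_norm_bound_integral) (use assms in auto)
  also have "\<dots> = G * (t - s)" using assms(2) by simp
  finally show ?thesis .
qed

text \<open>
  Lyapunov estimates for a curve given in integral form \<open>x(t) = x(a) + \<integral>\<^sub>a\<^sup>t g\<close> with bounded
  \<open>g\<close>: \<open>dV z\<close> is the derivative of \<open>V\<close> at \<open>z\<close>, with quadratic remainder. They are proved by
  telescoping rather than by the chain rule, which would need absolute continuity of \<open>V \<circ> x\<close>.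
\<close>
lemma lyapunov_increment_integral_form:
  fixes x g :: "real \<Rightarrow> 'a::euclidean_space" and V :: "'a \<Rightarrow> real"
    and dV :: "'a \<Rightarrow> 'a \<Rightarrow> real" and w :: "real \<Rightarrow> real"
  assumes ab: "a \<le> b" and gint: "g integrable_on {a..b}" and wint: "w integrable_on {a..b}"
    and xb: "x b = x a + integral {a..b} g"
    and xlip: "\<And>t. t \<in> {a..b} \<Longrightarrow> norm (x t - x a) \<le> G * (t - a)"
    and gb: "\<And>s. s \<in> {a..b} \<Longrightarrow> norm (g s) \<le> G" and G: "G \<ge> 0"
    and lin: "\<And>z. bounded_linear (dV z)"
    and Vq: "\<And>z \<Delta>. V (z + \<Delta>) \<le> V z + dV z \<Delta> + Cq * (norm \<Delta>)\<^sup>2"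
    and dVL: "\<And>z z' v. dV z v - dV z' v \<le> Lq * norm (z - z') * norm v"
    and decr: "\<And>s. s \<in> {a..b} \<Longrightarrow> dV (x s) (g s) \<le> - w s"
    and Cq: "Cq \<ge> 0" and Lq: "Lq \<ge> 0"
  shows "V (x b) - V (x a) \<le> - integral {a..b} w + (Lq + Cq) * G\<^sup>2 * (b - a)\<^sup>2"
proof -
  define \<Delta> where "\<Delta> = x b - x a"
  have \<Delta>_int: "\<Delta> = integral {a..b} g" using xb by (simp add: \<Delta>_def)
  have "norm \<Delta> \<le> G * (b - a)" unfolding \<Delta>_def using xlip[of b] ab by simp
  then have \<Delta>_sq: "(norm \<Delta>)\<^sup>2 \<le> G\<^sup>2 * (b - a)\<^sup>2" by (simp add: power_mono flip: power_mult_distrib)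
  have pw: "dV (x a) (g s) \<le> - w s + Lq * G\<^sup>2 * (b - a)" if s: "s \<in> {a..b}" for s
  proof -
    have "dV (x a) (g s) - dV (x s) (g s) \<le> Lq * norm (x s - x a) * norm (g s)"
      using dVL[where z="x a" and z'="x s" and v="g s"] by (simp add: norm_minus_commute)
    also have "\<dots> \<le> Lq * (G * (b - a)) * G"
      using xlip[OF s] s gb[OF s] Lq G
      by (intro mult_mono mult_left_mono order_trans[OF _ mult_left_mono[of _ "b - a" G]]) auto
    finally show ?thesis using decr[OF s] by (simp add: power2_eq_square algebra_simps)
  qed
  have "dV (x a) \<Delta> = integral {a..b} (\<lambda>s. dV (x a) (g s))"
    unfolding \<Delta>_int using integral_linear[OF gint lin[of "x a"]] by (simp add: o_def)
  also have "\<dots> \<le> integral {a..b} (\<lambda>s. - w s + Lq * G\<^sup>2 * (b - a))"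
    using integrable_linear[OF gint lin[of "x a"]] integrable_add[OF integrable_neg[OF wint] integrable_const_ivl] pw
    by (intro integral_le) (auto simp: o_def)
  also have "\<dots> = - integral {a..b} w + Lq * G\<^sup>2 * (b - a)\<^sup>2"
    using integral_add[OF integrable_neg[OF wint] integrable_const_ivl, of "Lq * G\<^sup>2 * (b - a)"] ab
    by (simp add: integral_neg power2_eq_square)
  finally have "dV (x a) \<Delta> \<le> - integral {a..b} w + Lq * G\<^sup>2 * (b - a)\<^sup>2" .
  moreover have "V (x b) \<le> V (x a) + dV (x a) \<Delta> + Cq * (norm \<Delta>)\<^sup>2"
    using Vq[of "x a" \<Delta>] by (simp add: \<Delta>_def)
  moreover have "Cq * (norm \<Delta>)\<^sup>2 \<le> Cq * (G\<^sup>2 * (b - a)\<^sup>2)" using \<Delta>_sq Cq by (rule mult_left_mono)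
  ultimately show ?thesis by (simp add: algebra_simps)
qed

lemma lyapunov_decrease_integral_form:
  fixes x g :: "real \<Rightarrow> 'a::euclidean_space" and V :: "'a \<Rightarrow> real"
    and dV :: "'a \<Rightarrow> 'a \<Rightarrow> real" and w :: "real \<Rightarrow> real"
  assumes ab: "a \<le> b" and gint: "g integrable_on {a..b}" and wint: "w integrable_on {a..b}"
    and xeq: "\<And>t. t \<in> {a..b} \<Longrightarrow> x t = x a + integral {a..t} g"
    and gb: "\<And>s. s \<in> {a..b} \<Longrightarrow> norm (g s) \<le> G" and G: "G \<ge> 0"
    and lin: "\<And>z. bounded_linear (dV z)"
    and Vq: "\<And>z \<Delta>. V (z + \<Delta>) \<le> V z + dV z \<Delta> + Cq * (norm \<Delta>)\<^sup>2"
    and dVL: "\<And>z z' v. dV z v - dV z' v \<le> Lq * norm (z - z') * norm v"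
    and decr: "\<And>s. s \<in> {a..b} \<Longrightarrow> dV (x s) (g s) \<le> - w s"
    and Cq: "Cq \<ge> 0" and Lq: "Lq \<ge> 0"
  shows "V (x b) + integral {a..b} w \<le> V (x a)"
proof -
  have gsub: "g integrable_on {t..u}" and wsub: "w integrable_on {t..u}" if "a \<le> t" "u \<le> b" for t u
    using that by (auto intro: integrable_subinterval_real[OF gint] integrable_subinterval_real[OF wint])
  have diff: "x u = x t + integral {t..u} g" if "a \<le> t" "t \<le> u" "u \<le> b" for t u
  proof -
    have "integral {a..t} g + integral {t..u} g = integral {a..u} g"
      by (rule Henstock_Kurzweil_Integration.integral_combine) (use that in \<open>auto intro: gsub\<close>)
    thus ?thesis using xeq[of t] xeq[of u] that by (auto simp: algebra_simps)
  qed
  define \<phi> where "\<phi> t = V (x t) + integral {a..t} w" for t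
  have step: "\<phi> (t + h) - \<phi> t \<le> ((Lq + Cq) * G\<^sup>2) * h\<^sup>2" if th: "a \<le> t" "0 \<le> h" "t + h \<le> b" for t h
  proof -
    have lip: "norm (x s - x t) \<le> G * (s - t)" if "s \<in> {t..t+h}" for s
      using diff[of t s] that th gb gsub[of t s] by (auto intro!: norm_integral_le_length)
    have "V (x (t + h)) - V (x t) \<le> - integral {t..t+h} w + (Lq + Cq) * G\<^sup>2 * (t + h - t)\<^sup>2"
      by (rule lyapunov_increment_integral_form[where x = x and a = t and b = "t + h" and g = g
            and V = V and dV = dV and w = w])
        (use lip th gsub wsub diff[of t "t + h"] gb decr G lin Vq dVL Cq Lq in auto)
    moreover have "integral {a..t+h} w = integral {a..t} w + integral {t..t+h} w"
      by (rule Henstock_Kurzweil_Integration.integral_combine[symmetric]) (use th in \<open>auto intro: wsub\<close>)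
    ultimately show ?thesis unfolding \<phi>_def by simp
  qed
  have "\<phi> b \<le> \<phi> a" by (rule quadratic_increment_bound_imp_le[OF ab _ step]) (use Lq Cq in auto)
  thus ?thesis unfolding \<phi>_def by simp
qed

lemma barbalat:
  fixes h u :: "real \<Rightarrow> real"
  assumes hint: "\<And>s t. 0 \<le> s \<Longrightarrow> s \<le> t \<Longrightarrow> u integrable_on {s..t} \<and> h t - h s = integral {s..t} u"
    and uc: "uniformly_continuous_on {0..} u"
    and conv: "(h \<longlongrightarrow> L) at_top"
  shows "(u \<longlongrightarrow> 0) at_top"
proof (rule tendstoI)
  fix \<epsilon> :: real assume e: "\<epsilon> > 0"
  obtain d where d: "d > 0"
    and dd: "\<And>s t. s \<in> {0..} \<Longrightarrow> t \<in> {0..} \<Longrightarrow> dist t s < d \<Longrightarrow> dist (u t) (u s) < \<epsilon>/2"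
    using uc e unfolding uniformly_continuous_on_def by (metis half_gt_zero)
  define \<delta> where "\<delta> = d/2"
  have \<delta>: "\<delta> > 0" using d by (simp add: \<delta>_def)
  have "\<forall>\<^sub>F t in at_top. dist (h t) L < \<epsilon> * \<delta> / 8"
    using conv e \<delta> by (intro tendstoD) auto
  then obtain T where T: "\<And>t. t \<ge> T \<Longrightarrow> \<bar>h t - L\<bar> < \<epsilon> * \<delta> / 8"
    unfolding eventually_at_top_linorder dist_real_def by blast
  have "\<bar>u t\<bar> < \<epsilon>" if t: "t \<ge> max T 0" for t
  proof -
    have ui: "u integrable_on {t..t+\<delta>}" and heq: "h (t + \<delta>) - h t = integral {t..t+\<delta>} u"
      using hint[of t "t+\<delta>"] t \<delta> by auto
    have "norm (integral {t..t+\<delta>} (\<lambda>r. u r - u t)) \<le> \<epsilon>/2 * (t + \<delta> - t)"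
      using dd[of t] t d \<delta> integrable_diff[OF ui integrable_const_ivl]
      by (intro norm_integral_le_length) (auto simp: dist_real_def \<delta>_def less_imp_le)
    then have "\<bar>(h (t + \<delta>) - h t) - \<delta> * u t\<bar> \<le> \<epsilon> * \<delta> / 2"
      using \<delta> by (simp add: heq integral_diff[OF ui integrable_const_ivl])
    moreover have "\<bar>h t - L\<bar> < \<epsilon> * \<delta> / 8" "\<bar>h (t + \<delta>) - L\<bar> < \<epsilon> * \<delta> / 8"
      using T[of t] T[of "t + \<delta>"] t \<delta> by auto
    ultimately have "\<bar>\<delta> * u t\<bar> < \<epsilon> * \<delta>" using e \<delta> by arith
    then show ?thesis using \<delta> by (simp add: abs_mult mult.commute[of \<epsilon>])
  qed
  then show "\<forall>\<^sub>F t in at_top. dist (u t) 0 < \<epsilon>"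
    unfolding eventually_at_top_linorder dist_real_def by (intro exI[of _ "max T 0"]) simp
qed

lemma integral_form_nonneg_invariant:
  fixes u v :: "real \<Rightarrow> real"
  assumes t1: "0 \<le> t1" and cont: "continuous_on {0..t1} u"
    and int: "\<And>s t. 0 \<le> s \<Longrightarrow> s \<le> t \<Longrightarrow> t \<le> t1 \<Longrightarrow> v integrable_on {s..t} \<and> u t - u s = integral {s..t} v"
    and pos: "\<And>r. r \<in> {0..t1} \<Longrightarrow> u r \<le> 0 \<Longrightarrow> v r \<ge> 0"
    and u0: "u 0 \<ge> 0"
  shows "u t1 \<ge> 0"
proof (rule ccontr)
  assume neg: "\<not> u t1 \<ge> 0"
  define S where "S = {0..t1} \<inter> u -` {0..}"
  have "closed S" unfolding S_def by (rule continuous_closed_preimage[OF cont]) auto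
  moreover have bS: "bdd_above S" unfolding S_def by (rule bdd_aboveI[of _ t1]) auto
  moreover have "S \<noteq> {}" using t1 u0 by (auto simp: S_def)
  ultimately have "Sup S \<in> S" using closed_contains_Sup by blast
  define s0 where "s0 = Sup S"
  have s0: "0 \<le> s0" "s0 \<le> t1" "u s0 \<ge> 0" using \<open>Sup S \<in> S\<close> by (auto simp: S_def s0_def)
  have after: "u r < 0" if "s0 < r" "r \<le> t1" for r
    using cSup_upper[OF _ bS, of r] that s0 by (force simp: S_def s0_def)
  have s0lt: "s0 < t1" using s0 neg by (cases "s0 = t1") auto
  have us0: "u s0 \<le> 0"
  proof (rule ccontr)
    assume "\<not> u s0 \<le> 0"
    then obtain d where d: "d > 0"
      and dd: "\<And>r. r \<in> {0..t1} \<Longrightarrow> dist r s0 < d \<Longrightarrow> dist (u r) (u s0) < u s0"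
      using cont s0 unfolding continuous_on_iff by (metis atLeastAtMost_iff not_le)
    define r where "r = min (s0 + d/2) t1"
    have r: "s0 < r" "r \<le> t1" "r \<in> {0..t1}" "dist r s0 < d"
      using d s0lt s0 by (auto simp: r_def dist_real_def)
    have "u r > 0" using dd[OF r(3) r(4)] by (auto simp: dist_real_def)
    thus False using after[OF r(1) r(2)] by simp
  qed
  have "v r \<ge> 0" if "r \<in> {s0..t1}" for r
    using pos[of r] after[of r] us0 that s0 by (cases "r = s0") auto
  hence "integral {s0..t1} v \<ge> 0" using int[of s0 t1] s0 s0lt by (intro integral_nonneg) auto
  hence "u t1 \<ge> u s0" using int[of s0 t1] s0 s0lt by simp
  thus False using neg s0 by simp
qed

lemma integral_form_eventually_nonpos:
  fixes u v :: "real \<Rightarrow> real"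
  assumes int: "\<And>s t. T \<le> s \<Longrightarrow> s \<le> t \<Longrightarrow> v integrable_on {s..t} \<and> u t - u s = integral {s..t} v"
    and nn: "\<And>t. t \<ge> T \<Longrightarrow> u t \<ge> 0"
    and vneg: "\<And>t. t \<ge> T \<Longrightarrow> v t \<le> 0"
    and vstrict: "\<And>t. t \<ge> T \<Longrightarrow> u t > 0 \<Longrightarrow> v t \<le> - \<beta>" and b: "\<beta> > 0"
  shows "\<forall>\<^sub>F t in at_top. u t \<le> 0"
proof (cases "\<exists>T1\<ge>T. u T1 \<le> 0")
  case True
  then obtain T1 where T1: "T1 \<ge> T" "u T1 \<le> 0" by blast
  have "u t \<le> 0" if "t \<ge> T1" for t
  proof -
    have "integral {T1..t} v \<le> integral {T1..t} (\<lambda>_. 0)"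
      using int[of T1 t] vneg T1 that by (intro integral_le) auto
    thus ?thesis using int[of T1 t] T1 that by simp
  qed
  thus ?thesis unfolding eventually_at_top_linorder by blast
next
  case False
  hence pos: "\<And>t. t \<ge> T \<Longrightarrow> u t > 0" by force
  define t where "t = T + (u T + 1) / \<beta>"
  have tT: "t \<ge> T" using nn[of T] b by (simp add: t_def)
  have "integral {T..t} v \<le> integral {T..t} (\<lambda>_. - \<beta>)"
    using int[of T t] vstrict pos tT by (intro integral_le) auto
  also have "\<dots> = - (u T + 1)" using tT b by (simp add: t_def)
  finally have "u t \<le> -1" using int[of T t] tT by simp
  thus ?thesis using nn[OF tT] by simp
qed

lemma bounded_mono_tendsto_at_top:
  fixes h :: "real \<Rightarrow> real"
  assumes mono: "\<And>s t. 0 \<le> s \<Longrightarrow> s \<le> t \<Longrightarrow> h s \<le> h t" and bd: "\<And>t. t \<ge> 0 \<Longrightarrow> h t \<le> K"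
  shows "\<exists>L. (h \<longlongrightarrow> L) at_top"
proof
  have bdd: "bdd_above (h ` {0..})" using bd by (intro bdd_aboveI[of _ K]) auto
  show "(h \<longlongrightarrow> Sup (h ` {0..})) at_top"
  proof (rule increasing_tendsto)
    show "\<forall>\<^sub>F t in at_top. h t \<le> Sup (h ` {0..})"
      using bdd unfolding eventually_at_top_linorder by (auto intro!: exI[of _ 0] cSup_upper)
    show "\<forall>\<^sub>F t in at_top. y < h t" if y: "y < Sup (h ` {0..})" for y
    proof -
      obtain t0 where "t0 \<ge> 0" "y < h t0" using y less_cSup_iff[OF _ bdd] by auto
      thus ?thesis unfolding eventually_at_top_linorder using mono by (metis less_le_trans order_trans)
    qed
  qed
qed

lemma tendsto_zero_if_square_dominated:
  fixes f :: "'a \<Rightarrow> 'b::real_normed_vector"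
  assumes k: "k > 0" and le: "\<And>t. k * (norm (f t))\<^sup>2 \<le> W t" and W: "(W \<longlongrightarrow> 0) F"
  shows "(f \<longlongrightarrow> 0) F"
proof -
  have "((\<lambda>t. (norm (f t))\<^sup>2) \<longlongrightarrow> 0) F"
  proof (rule tendsto_sandwich[of "\<lambda>_. 0" _ _ "\<lambda>t. W t / k"])
    show "\<forall>\<^sub>F t in F. (norm (f t))\<^sup>2 \<le> W t / k" using le k by (simp add: pos_le_divide_eq mult.commute)
    show "((\<lambda>t. W t / k) \<longlongrightarrow> 0) F" using tendsto_divide_zero[OF W] .
  qed auto
  hence "((\<lambda>t. sqrt ((norm (f t))\<^sup>2)) \<longlongrightarrow> 0) F" using tendsto_real_sqrt by fastforce
  thus ?thesis by (simp add: tendsto_norm_zero_iff)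
qed

lemma continuous_on_matrix_vector_mult [continuous_intros]:
  "continuous_on S f \<Longrightarrow> continuous_on S (\<lambda>x. (A::real^'m::finite^'k::finite) *v f x)"
  by (rule continuous_on_compose2[OF matrix_vector_mult_linear_continuous_on]) auto

lemma uniformly_continuous_on_subset:
  fixes f :: "'a::metric_space \<Rightarrow> 'b::metric_space"
  shows "uniformly_continuous_on T f \<Longrightarrow> S \<subseteq> T \<Longrightarrow> uniformly_continuous_on S f"
  unfolding uniformly_continuous_on_def by (meson subsetD)

lemma filterlim_real_subseq_at_top:
  "strict_mono r \<Longrightarrow> filterlim (\<lambda>k. real (r k)) at_top sequentially"
  by (rule filterlim_compose[OF filterlim_real_sequentially filterlim_subseq])

lemma infdist_lessE:
  assumes "infdist x A < d" "A \<noteq> {}"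
  obtains a where "a \<in> A" "dist x a < d"
  using assms cINF_less_iff[of A "\<lambda>a. dist x a" d]
  by (auto simp: infdist_notempty intro: bdd_belowI[of _ 0])

section \<open>Diagonal weights and the projection\<close>

lemma pos_diag_mult_vec:
  assumes "pos_diag A"
  shows "A *v v = (\<chi> i. A $ i $ i * v $ i)"
proof -
  have "(\<Sum>j\<in>UNIV. A $ i $ j * v $ j) = (\<Sum>j\<in>UNIV. if j = i then A $ i $ i * v $ i else 0)" for i
    by (rule sum.cong) (use assms in \<open>auto simp: pos_diag_def\<close>)
  then show ?thesis by (simp add: matrix_vector_mult_def vec_eq_iff)
qed

lemma pos_diag_nonzero: "pos_diag A \<Longrightarrow> A $ i $ i \<noteq> 0"
  by (simp add: pos_diag_def less_imp_neq[symmetric])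

lemma inner_scale_commute:
  fixes u v :: "real^'a::finite"
  shows "inner u (\<chi> i. t i * v $ i) = inner (\<chi> i. t i * u $ i) v"
  by (simp add: inner_vec_def inner_real_def algebra_simps)

lemma inner_scale_ge:
  fixes v :: "real^'a::finite"
  assumes "\<And>i. m \<le> t i"
  shows "m * inner v v \<le> inner v (\<chi> i. t i * v $ i)"
proof -
  have "m * (v $ i * v $ i) \<le> t i * (v $ i * v $ i)" for i
    by (rule mult_right_mono[OF assms zero_le_square])
  then show ?thesis unfolding inner_vec_def inner_real_def sum_distrib_left
    by (intro sum_mono) (simp add: algebra_simps)
qed

lemma inner_transpose: "inner u (transpose A *v v) = inner ((A::real^_^_) *v u) v"
  by (metis dot_lmul_matrix inner_commute transpose_matrix_vector)

lemma inner_proj_plus_le: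
  fixes y y' u u' :: "real^'a::finite"
  assumes "\<And>i. u $ i \<ge> 0" "\<And>i. u' $ i \<ge> 0" "proj_plus y' u' = 0"
  shows "inner (u - u') (proj_plus y u) \<le> inner (u - u') (y - y')"
  unfolding inner_vec_def inner_real_def
proof (rule sum_mono)
  fix i
  have "y' $ i \<le> 0 \<and> u' $ i * y' $ i = 0"
    using arg_cong[OF assms(3), of "\<lambda>w. w $ i"] assms(2)[of i]
    by (auto simp: proj_plus_def split: if_splits)
  then show "(u - u') $ i * proj_plus y u $ i \<le> (u - u') $ i * (y - y') $ i"
    using assms(1,2)[of i] mult_nonneg_nonpos[of "u $ i" "y' $ i"] mult_nonneg_nonpos[of "u' $ i" "y $ i"]
    by (auto simp: proj_plus_def algebra_simps)
qed

lemma norm_proj_plus_le: "norm (proj_plus y u) \<le> norm y"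
  by (rule norm_le_componentwise_cart) (simp add: proj_plus_def)

lemma norm_Pair_mono: "norm b \<le> norm b' \<Longrightarrow> norm (a, b) \<le> norm (a, b')"
  unfolding norm_Pair by (intro real_sqrt_le_mono add_left_mono power_mono) auto

lemma quadratic_form_ge:
  fixes a b u v :: real
  shows "min (b/2) (2*a - b/2) * (u\<^sup>2 + v\<^sup>2) \<le> a * (u - v)\<^sup>2 + b * (u * v)"
proof (cases "b \<ge> 2*a")
  case True
  have "a * (u - v)\<^sup>2 + b * (u * v) - (2*a - b/2) * (u\<^sup>2 + v\<^sup>2) = (b/2 - a) * (u + v)\<^sup>2"
    by (simp add: power2_eq_square algebra_simps)
  moreover have "(b/2 - a) * (u + v)\<^sup>2 \<ge> 0" using True by simp
  moreover have "min (b/2) (2*a - b/2) = 2*a - b/2" using True by simp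
  ultimately show ?thesis by (metis diff_ge_0_iff_ge)
next
  case False
  have "a * (u - v)\<^sup>2 + b * (u * v) - (b/2) * (u\<^sup>2 + v\<^sup>2) = (a - b/2) * (u - v)\<^sup>2"
    by (simp add: power2_eq_square algebra_simps)
  moreover have "(a - b/2) * (u - v)\<^sup>2 \<ge> 0" using False by simp
  moreover have "min (b/2) (2*a - b/2) = b/2" using False by simp
  ultimately show ?thesis by (metis diff_ge_0_iff_ge)
qed


section \<open>The network dynamics and its Lyapunov function\<close>

abbreviation qhat_of :: "('n::finite, 'e::finite) state \<Rightarrow> real^'n" where
  "qhat_of z \<equiv> fst z"
abbreviation theta_of :: "('n::finite, 'e::finite) state \<Rightarrow> real^'e" where
  "theta_of z \<equiv> fst (snd z)"
abbreviation lambda_of :: "('n::finite, 'e::finite) state \<Rightarrow> real" where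
  "lambda_of z \<equiv> fst (snd (snd z))"
abbreviation omega_of :: "('n::finite, 'e::finite) state \<Rightarrow> real^'n" where
  "omega_of z \<equiv> fst (snd (snd (snd z)))"
abbreviation alpha_of :: "('n::finite, 'e::finite) state \<Rightarrow> real^'n" where
  "alpha_of z \<equiv> fst (snd (snd (snd (snd z))))"
abbreviation eta_of :: "('n::finite, 'e::finite) state \<Rightarrow> real^('e + 'e)" where
  "eta_of z \<equiv> snd (snd (snd (snd (snd z))))"

lemma Iset_iff: "z \<in> Iset \<longleftrightarrow> (\<forall>i. eta_of z $ i \<ge> 0)"
  by (cases z) (auto simp: Iset_def)

lemma closed_Iset: "closed (Iset :: ('n::finite, 'e::finite) state set)"
proof -
  have "closed {z :: ('n, 'e) state. \<forall>i. 0 \<le> eta_of z $ i}"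
    by (simp add: Collect_all_eq closed_INT closed_Collect_le continuous_intros)
  moreover have "Iset = {z :: ('n, 'e) state. \<forall>i. 0 \<le> eta_of z $ i}" by (auto simp: Iset_iff)
  ultimately show ?thesis by simp
qed

lemma bounded_linear_component:
  "bounded_linear (\<lambda>w::('n::finite, 'e::finite) state. eta_of w $ i)"
  "bounded_linear (\<lambda>w::('n::finite, 'e::finite) state. alpha_of w $ j)"
  "bounded_linear (\<lambda>w::('n::finite, 'e::finite) state. omega_of w $ j)"
  by (intro bounded_linear_compose[OF bounded_linear_vec_nth] bounded_linear_compose[OF bounded_linear_snd]
      bounded_linear_compose[OF bounded_linear_fst] bounded_linear_ident)+

locale network =
  fixes C :: "real^'e::finite^'n::finite" and B :: "real^'e^'e" and H :: "real^('e + 'e)^'n"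
    and F :: "real^('e + 'e)"
    and D M Tq :: "real^'n^'n" and Teta :: "real^('e + 'e)^('e + 'e)"
    and Tl \<rho> :: real and tau c cbar d :: "real^'n"
  assumes B: "pos_diag B" and D: "pos_diag D" and M: "pos_diag M" and Tq: "pos_diag Tq"
    and Teta: "pos_diag Teta" and Tl: "Tl > 0" and tau: "\<And>j. tau $ j > 0"
    and c: "\<And>j. c $ j > 0" and rho: "0 < \<rho>" "\<rho> < 4 * Min (range (\<lambda>j. c $ j))"
begin

abbreviation K :: "('n, 'e) state \<Rightarrow> ('n, 'e) state" where
  "K \<equiv> Kop Tq Tl M tau Teta"

definition pi_of :: "('n, 'e) state \<Rightarrow> real^'n" where
  "pi_of z = (\<chi> j. lambda_of z) - H *v eta_of z - omega_of z"

definition q_of :: "('n, 'e) state \<Rightarrow> real^'n" where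
  "q_of z = (1 / \<rho>) *\<^sub>R (pi_of z - alpha_of z) + qhat_of z"

definition y_of :: "('n, 'e) state \<Rightarrow> real^('e + 'e)" where
  "y_of z = transpose H *v (q_of z - d) - F"

definition vf :: "('n, 'e) state \<Rightarrow> ('n, 'e) state" where
  "vf z = (pi_of z - alpha_of z,
           transpose C *v omega_of z,
           - (\<Sum>j\<in>UNIV. (q_of z - d) $ j),
           q_of z - d - D *v omega_of z - C *v (B *v theta_of z),
           (\<chi> j. q_of z $ j - (pi_of z $ j - cbar $ j) / c $ j),
           proj_plus (y_of z) (eta_of z))"

definition equilibria :: "('n, 'e) state set" where
  "equilibria = {z \<in> Iset. vf z = 0}"

definition Kinv :: "('n, 'e) state \<Rightarrow> ('n, 'e) state" where
  "Kinv w = ((\<chi> i. qhat_of w $ i / Tq $ i $ i), theta_of w, lambda_of w / Tl,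
            (\<chi> i. omega_of w $ i / M $ i $ i), (\<chi> i. alpha_of w $ i / tau $ i),
            (\<chi> i. eta_of w $ i / Teta $ i $ i))"

definition g :: "('n, 'e) state \<Rightarrow> ('n, 'e) state" where
  "g z = Kinv (vf z)"

text \<open>
  The Lyapunov weight is \<open>K\<close> with the \<open>\<theta>\<close>-block replaced by \<open>B\<close>, so that the two coupling
  terms through \<open>C\<close> cancel.
\<close>
definition P :: "('n, 'e) state \<Rightarrow> ('n, 'e) state" where
  "P w = (Tq *v qhat_of w, B *v theta_of w, Tl * lambda_of w, M *v omega_of w,
          (\<chi> j. tau $ j * alpha_of w $ j), Teta *v eta_of w)"

definition V :: "('n, 'e) state \<Rightarrow> ('n, 'e) state \<Rightarrow> real" where
  "V p z = inner (z - p) (P (z - p)) / 2"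

definition eps :: "'n \<Rightarrow> real" where
  "eps j = min ((1 / c $ j) / 2) (2 * (1 / \<rho>) - (1 / c $ j) / 2)"

definition W :: "('n, 'e) state \<Rightarrow> ('n, 'e) state \<Rightarrow> real" where
  "W p z = (\<Sum>j\<in>UNIV. eps j * (((pi_of z - pi_of p) $ j)\<^sup>2 + ((alpha_of z - alpha_of p) $ j)\<^sup>2)
                      + D $ j $ j * ((omega_of z - omega_of p) $ j)\<^sup>2)"

lemma vf_eq_0_iff: "vf z = 0 \<longleftrightarrow>
   pi_of z - alpha_of z = 0 \<and> transpose C *v omega_of z = 0 \<and> (\<Sum>j\<in>UNIV. (q_of z - d) $ j) = 0 \<and>
   q_of z - d - D *v omega_of z - C *v (B *v theta_of z) = 0 \<and>
   (\<chi> j. q_of z $ j - (pi_of z $ j - cbar $ j) / c $ j) = 0 \<and> proj_plus (y_of z) (eta_of z) = 0"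
  unfolding vf_def zero_prod_def prod.inject neg_equal_0_iff_equal ..

lemma eps_pos: "eps j > 0"
proof -
  have "Min (range (\<lambda>j. c $ j)) \<le> c $ j" by (rule Min_le) auto
  hence "\<rho> < 4 * c $ j" using rho by linarith
  hence "(1 / c $ j) / 2 < 2 * (1 / \<rho>)" using c[of j] rho by (simp add: field_simps)
  thus ?thesis using c[of j] unfolding eps_def by simp
qed

lemma W_ge:
  "eps j * ((pi_of z - pi_of p) $ j)\<^sup>2 \<le> W p z"
  "eps j * ((alpha_of z - alpha_of p) $ j)\<^sup>2 \<le> W p z"
  "D $ j $ j * ((omega_of z - omega_of p) $ j)\<^sup>2 \<le> W p z"
proof -
  have D0: "D $ i $ i > 0" for i using D by (simp add: pos_diag_def)
  have terms: "0 \<le> eps i * ((pi_of z - pi_of p) $ i)\<^sup>2" "0 \<le> eps i * ((alpha_of z - alpha_of p) $ i)\<^sup>2"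
    "0 \<le> D $ i $ i * ((omega_of z - omega_of p) $ i)\<^sup>2" for i
    using eps_pos[of i] D0[of i] by simp_all
  have "eps j * ((pi_of z - pi_of p) $ j)\<^sup>2 + eps j * ((alpha_of z - alpha_of p) $ j)\<^sup>2
          + D $ j $ j * ((omega_of z - omega_of p) $ j)\<^sup>2 \<le> W p z"
    unfolding W_def distrib_left by (rule member_le_sum) (use terms in \<open>auto intro!: add_nonneg_nonneg\<close>)
  then show "eps j * ((pi_of z - pi_of p) $ j)\<^sup>2 \<le> W p z"
    "eps j * ((alpha_of z - alpha_of p) $ j)\<^sup>2 \<le> W p z"
    "D $ j $ j * ((omega_of z - omega_of p) $ j)\<^sup>2 \<le> W p z"
    using terms[of j] by linarith+
qed

lemma W_nonneg: "W p z \<ge> 0"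
  by (rule order_trans[OF _ W_ge(3)]) (use D in \<open>simp add: pos_diag_def less_imp_le\<close>)

lemma P_g: "P (g z) = (qhat_of (vf z), B *v theta_of (vf z), lambda_of (vf z), omega_of (vf z),
                       alpha_of (vf z), eta_of (vf z))"
  using Tl tau[THEN less_imp_neq]
  by (simp add: P_def g_def Kinv_def pos_diag_mult_vec[OF Tq] pos_diag_mult_vec[OF M]
      pos_diag_mult_vec[OF Teta] pos_diag_nonzero[OF Tq] pos_diag_nonzero[OF M]
      pos_diag_nonzero[OF Teta] vec_eq_iff)

lemma equilibria_eqs:
  assumes "p \<in> equilibria"
  shows "pi_of p = alpha_of p" "transpose C *v omega_of p = 0" "(\<Sum>j\<in>UNIV. (q_of p - d) $ j) = 0"
    "q_of p - d - D *v omega_of p - C *v (B *v theta_of p) = 0"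
    "\<And>j. q_of p $ j = (pi_of p $ j - cbar $ j) / c $ j" "proj_plus (y_of p) (eta_of p) = 0"
  using assms by (auto simp: equilibria_def vf_eq_0_iff vec_eq_iff simp del: transpose_matrix_vector)

text \<open>The quadratic part of \<open>-d/dt V\<^sub>p\<close>.\<close>
definition Q :: "('n, 'e) state \<Rightarrow> ('n, 'e) state \<Rightarrow> real" where
  "Q p z = (let dpi = pi_of z - pi_of p; dal = alpha_of z - alpha_of p; dom = omega_of z - omega_of p
            in (1 / \<rho>) * inner (dpi - dal) (dpi - dal) + inner dom (D *v dom)
               + (\<Sum>j\<in>UNIV. dal $ j * dpi $ j / c $ j))"

lemma W_le_Q: "W p z \<le> Q p z"
proof -
  define dpi where "dpi = pi_of z - pi_of p"
  define dal where "dal = alpha_of z - alpha_of p"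
  define dom where "dom = omega_of z - omega_of p"
  have "W p z = (\<Sum>j\<in>UNIV. eps j * ((dpi $ j)\<^sup>2 + (dal $ j)\<^sup>2) + D $ j $ j * (dom $ j)\<^sup>2)"
    by (simp add: W_def dpi_def dal_def dom_def)
  also have "\<dots> \<le> (\<Sum>j\<in>UNIV. (1 / \<rho>) * (dpi $ j - dal $ j)\<^sup>2 + (1 / c $ j) * (dpi $ j * dal $ j)
                             + D $ j $ j * (dom $ j)\<^sup>2)"
    unfolding eps_def by (intro sum_mono add_right_mono quadratic_form_ge)
  also have "\<dots> = (\<Sum>j\<in>UNIV. (1 / \<rho>) * ((dpi - dal) $ j * (dpi - dal) $ j) + D $ j $ j * (dom $ j * dom $ j)
                         + dal $ j * dpi $ j / c $ j)"
    by (intro sum.cong) (simp_all add: power2_eq_square algebra_simps)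
  also have "\<dots> = Q p z"
    by (simp add: Q_def Let_def dpi_def dal_def dom_def sum.distrib sum_distrib_left inner_vec_def
        pos_diag_mult_vec[OF D] ac_simps)
  finally show ?thesis .
qed

lemma vf_sub_equilibrium:
  assumes "p \<in> equilibria"
  shows "pi_of z - alpha_of z = (pi_of z - pi_of p) - (alpha_of z - alpha_of p)"
    and "transpose C *v omega_of z = transpose C *v (omega_of z - omega_of p)"
    and "(\<Sum>j\<in>UNIV. (q_of z - d) $ j) = (\<Sum>j\<in>UNIV. (q_of z - q_of p) $ j)"
    and "q_of z - d - D *v omega_of z - C *v (B *v theta_of z)
           = (q_of z - q_of p) - D *v (omega_of z - omega_of p) - C *v (B *v (theta_of z - theta_of p))"
    and "(\<chi> j. q_of z $ j - (pi_of z $ j - cbar $ j) / c $ j)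
           = (q_of z - q_of p) - (\<chi> j. (pi_of z - pi_of p) $ j / c $ j)"
proof -
  note p0 = equilibria_eqs[OF assms]
  show "pi_of z - alpha_of z = (pi_of z - pi_of p) - (alpha_of z - alpha_of p)"
    using p0(1) by simp
  show "transpose C *v omega_of z = transpose C *v (omega_of z - omega_of p)"
    using p0(2) by (simp add: matrix_vector_mult_diff_distrib del: transpose_matrix_vector)
  show "(\<Sum>j\<in>UNIV. (q_of z - d) $ j) = (\<Sum>j\<in>UNIV. (q_of z - q_of p) $ j)"
    using p0(3) by (simp add: sum_subtractf)
  show "q_of z - d - D *v omega_of z - C *v (B *v theta_of z)
          = (q_of z - q_of p) - D *v (omega_of z - omega_of p) - C *v (B *v (theta_of z - theta_of p))"
    using p0(4) by (simp add: matrix_vector_mult_diff_distrib algebra_simps)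
  show "(\<chi> j. q_of z $ j - (pi_of z $ j - cbar $ j) / c $ j)
          = (q_of z - q_of p) - (\<chi> j. (pi_of z - pi_of p) $ j / c $ j)"
    using p0(5) by (simp add: vec_eq_iff diff_divide_distrib)
qed

text \<open>All cross terms between the components cancel: the coupling is skew-symmetric for \<open>P\<close>.\<close>
lemma inner_P_g_eq:
  assumes p: "p \<in> equilibria"
  shows "inner (z - p) (P (g z)) = - Q p z
           + (inner (eta_of z - eta_of p) (proj_plus (y_of z) (eta_of z))
              - inner (eta_of z - eta_of p) (y_of z - y_of p))"
proof -
  define dqh where "dqh = qhat_of z - qhat_of p"
  define dth where "dth = theta_of z - theta_of p"
  define dl where "dl = lambda_of z - lambda_of p"
  define dom where "dom = omega_of z - omega_of p"
  define dal where "dal = alpha_of z - alpha_of p"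
  define det where "det = eta_of z - eta_of p"
  define dpi where "dpi = pi_of z - pi_of p"
  define dq where "dq = q_of z - q_of p"
  define w where "w = dpi - dal"
  note shift = vf_sub_equilibrium[OF p, of z, folded dth_def dom_def dal_def dpi_def dq_def]
  have "z - p = (dqh, dth, dl, dom, dal, det)"
    by (simp add: dqh_def dth_def dl_def dom_def dal_def det_def prod_eq_iff)
  then have split: "inner (z - p) (P (g z)) = inner dqh w + inner dth (B *v (transpose C *v dom))
      - dl * (\<Sum>j\<in>UNIV. dq $ j) + inner dom (dq - D *v dom - C *v (B *v dth))
      + inner dal (dq - (\<chi> j. dpi $ j / c $ j)) + inner det (proj_plus (y_of z) (eta_of z))"
    unfolding P_g vf_def prod.sel shift w_def[symmetric] by simp
  have coupling: "inner dth (B *v (transpose C *v dom)) = inner (C *v (B *v dth)) dom"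
    by (simp add: pos_diag_mult_vec[OF B] inner_scale_commute inner_transpose del: transpose_matrix_vector)
  have price: "dl * (\<Sum>j\<in>UNIV. dq $ j) = inner (\<chi> j. dl) dq"
    by (simp add: inner_vec_def sum_distrib_left)
  have flow: "inner det (y_of z - y_of p) = inner (H *v det) dq"
    by (simp add: y_of_def dq_def inner_transpose matrix_vector_mult_diff_distrib[symmetric]
        del: transpose_matrix_vector)
  have "dpi = (\<chi> j. dl) - H *v det - dom"
    by (simp add: dpi_def dl_def det_def dom_def pi_of_def matrix_vector_mult_diff_distrib vec_eq_iff)
  then have "inner (\<chi> j. dl) dq - inner (H *v det) dq - inner dom dq = inner dpi dq"
    by (simp add: inner_diff_left)
  moreover have "inner dpi dq - inner dal dq = inner w dq" by (simp add: w_def inner_diff_left)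
  moreover have "inner w dq = (1 / \<rho>) * inner w w + inner w dqh"
    by (simp add: w_def dq_def dqh_def q_of_def dpi_def dal_def inner_add_right algebra_simps)
  moreover have "Q p z = (1 / \<rho>) * inner w w + inner dom (D *v dom) + inner dal (\<chi> j. dpi $ j / c $ j)"
    by (simp add: Q_def Let_def w_def dpi_def dal_def dom_def inner_vec_def)
  ultimately show ?thesis
    unfolding split coupling price flow det_def[symmetric]
    by (simp add: inner_diff_right inner_commute[of dom] inner_commute[of dqh] algebra_simps)
qed

lemma inner_P_g_le:
  assumes p: "p \<in> equilibria" and z: "z \<in> Iset"
  shows "inner (z - p) (P (g z)) \<le> - W p z"
proof -
  have "inner (eta_of z - eta_of p) (proj_plus (y_of z) (eta_of z))
          \<le> inner (eta_of z - eta_of p) (y_of z - y_of p)"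
    using z p equilibria_eqs(6)[OF p] by (intro inner_proj_plus_le) (auto simp: Iset_iff equilibria_def)
  then show ?thesis using inner_P_g_eq[OF p, of z] W_le_Q[of p z] by linarith
qed

lemma Kinv_K: "Kinv (K z) = z"
proof -
  obtain a1 a2 a3 a4 a5 a6 where z: "z = (a1, a2, a3, a4, a5, a6)" by (metis prod.collapse)
  show ?thesis
    using Tl tau[THEN less_imp_neq]
    by (simp add: z Kop_def Kinv_def pos_diag_mult_vec[OF Tq] pos_diag_mult_vec[OF M]
        pos_diag_mult_vec[OF Teta] pos_diag_nonzero[OF Tq] pos_diag_nonzero[OF M]
        pos_diag_nonzero[OF Teta] vec_eq_iff)
qed

lemma bounded_linear_Kinv: "bounded_linear Kinv"
proof -
  have "linear Kinv"
    by (rule linearI) (simp_all add: Kinv_def vec_eq_iff add_divide_distrib)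
  thus ?thesis by (simp add: linear_conv_bounded_linear)
qed

lemma bounded_linear_P: "bounded_linear P"
proof -
  have "linear P"
    by (rule linearI)
      (simp_all add: P_def vec_eq_iff matrix_vector_right_distrib matrix_vector_mult_scaleR algebra_simps)
  thus ?thesis by (simp add: linear_conv_bounded_linear)
qed

lemma P_commute: "inner u (P v) = inner (P u) v"
  by (simp add: P_def pos_diag_mult_vec[OF Tq] pos_diag_mult_vec[OF B] pos_diag_mult_vec[OF M]
      pos_diag_mult_vec[OF Teta] inner_scale_commute inner_Pair_0 inner_prod_def)

definition P_min :: real where
  "P_min = Min (insert Tl (range (\<lambda>i. Tq $ i $ i) \<union> range (\<lambda>i. B $ i $ i) \<union> range (\<lambda>i. M $ i $ i)
                          \<union> range (\<lambda>i. tau $ i) \<union> range (\<lambda>i. Teta $ i $ i)))"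

lemma P_min_pos: "P_min > 0"
  unfolding P_min_def using Tq B M Teta Tl tau by (subst Min_gr_iff) (auto simp: pos_diag_def)

lemma P_min_le: "P_min \<le> Tl" "P_min \<le> Tq $ i $ i" "P_min \<le> B $ k $ k" "P_min \<le> M $ i $ i"
  "P_min \<le> tau $ i" "P_min \<le> Teta $ l $ l"
  unfolding P_min_def by (rule Min_le; simp)+

lemma P_ge: "P_min * (norm u)\<^sup>2 \<le> inner u (P u)"
proof -
  obtain a1 a2 a3 a4 a5 a6 where u: "u = (a1, a2, a3, a4, a5, a6)" by (metis prod.collapse)
  have "P_min * inner a3 a3 \<le> inner a3 (Tl * a3)"
    using mult_right_mono[OF P_min_le(1) zero_le_square[of a3]] by (simp add: algebra_simps)
  moreover have "P_min * inner a1 a1 \<le> inner a1 (Tq *v a1)" "P_min * inner a2 a2 \<le> inner a2 (B *v a2)"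
    "P_min * inner a4 a4 \<le> inner a4 (M *v a4)" "P_min * inner a5 a5 \<le> inner a5 (\<chi> j. tau $ j * a5 $ j)"
    "P_min * inner a6 a6 \<le> inner a6 (Teta *v a6)"
    unfolding pos_diag_mult_vec[OF Tq] pos_diag_mult_vec[OF B] pos_diag_mult_vec[OF M]
      pos_diag_mult_vec[OF Teta]
    by (intro inner_scale_ge P_min_le)+
  ultimately show ?thesis by (simp add: u P_def power2_norm_eq_inner distrib_left)
qed

definition P_norm :: real where
  "P_norm = onorm P"

lemma norm_P_le: "norm (P v) \<le> P_norm * norm v"
  unfolding P_norm_def using onorm[OF bounded_linear_P] .

lemma P_norm_nonneg: "P_norm \<ge> 0"
  unfolding P_norm_def using onorm_pos_le[OF bounded_linear_P] .

lemma inner_P_le: "inner u (P u) \<le> P_norm * (norm u)\<^sup>2"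
proof -
  have "inner u (P u) \<le> norm u * norm (P u)" by (rule norm_cauchy_schwarz)
  also have "\<dots> \<le> norm u * (P_norm * norm u)" by (intro mult_left_mono norm_P_le) auto
  finally show ?thesis by (simp add: power2_eq_square algebra_simps)
qed

lemma V_add: "V p (z + \<Delta>) = V p z + inner (z - p) (P \<Delta>) + inner \<Delta> (P \<Delta>) / 2"
proof -
  have shift: "z + \<Delta> - p = (z - p) + \<Delta>" by simp
  have cross: "inner \<Delta> (P (z - p)) = inner (z - p) (P \<Delta>)"
    using P_commute[of \<Delta> "z - p"] by (simp add: inner_commute)
  show ?thesis
    unfolding V_def shift linear_add[OF bounded_linear.linear[OF bounded_linear_P]]
      inner_add_left inner_add_right cross
    by (simp add: field_simps)
qed

lemma V_le: "V p z \<le> P_norm / 2 * (norm (z - p))\<^sup>2"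
  using inner_P_le[of "z - p"] unfolding V_def by simp

lemma V_ge: "P_min / 2 * (norm (z - p))\<^sup>2 \<le> V p z"
  using P_ge[of "z - p"] unfolding V_def by simp

lemma V_nonneg: "V p z \<ge> 0"
proof -
  have "0 \<le> P_min / 2 * (norm (z - p))\<^sup>2" using P_min_pos by simp
  then show ?thesis using V_ge[of z p] by linarith
qed

lemma V_self [simp]: "V p p = 0"
  by (simp add: V_def)

lemma continuous_on_P [continuous_intros]: "continuous_on S f \<Longrightarrow> continuous_on S (\<lambda>z. P (f z))"
  using bounded_linear.continuous_on[OF bounded_linear_P] by blast

lemma continuous_on_V: "continuous_on S (V p)"
  unfolding V_def by (intro continuous_intros) auto

lemma continuous_on_pi_of: "continuous_on S pi_of"
  unfolding pi_of_def by (intro continuous_intros)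

lemma continuous_on_q_of: "continuous_on S q_of"
  unfolding q_of_def by (intro continuous_intros continuous_on_pi_of)

lemma continuous_on_y_of: "continuous_on S y_of"
  unfolding y_of_def by (intro continuous_intros continuous_on_q_of)

lemma continuous_on_W: "continuous_on S (W p)"
  unfolding W_def by (intro continuous_intros continuous_on_pi_of)

lemma bounded_g_image:
  assumes "bounded S"
  shows "bounded (g ` S)"
proof -
  define vf' where "vf' z = (pi_of z - alpha_of z, transpose C *v omega_of z, - (\<Sum>j\<in>UNIV. (q_of z - d) $ j),
           q_of z - d - D *v omega_of z - C *v (B *v theta_of z),
           (\<chi> j. q_of z $ j - (pi_of z $ j - cbar $ j) / c $ j), y_of z)" for z
  have "continuous_on UNIV vf'"
    unfolding vf'_def using c[THEN less_imp_neq]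
    by (intro continuous_intros continuous_on_pi_of continuous_on_q_of continuous_on_y_of) auto
  hence "bounded (vf' ` closure S)"
    using assms by (intro compact_imp_bounded compact_continuous_image) (auto intro: continuous_on_subset)
  then obtain b where b: "\<And>z. z \<in> S \<Longrightarrow> norm (vf' z) \<le> b"
    using closure_subset unfolding bounded_iff by blast
  have vf_le: "norm (vf z) \<le> norm (vf' z)" for z
    unfolding vf_def vf'_def by (intro norm_Pair_mono norm_proj_plus_le)
  have "\<forall>y\<in>vf ` S. norm y \<le> b" using b by (auto intro: order_trans[OF vf_le])
  hence "bounded (vf ` S)" unfolding bounded_iff by blast
  hence "bounded (Kinv ` vf ` S)" by (rule bounded_linear_image[OF _ bounded_linear_Kinv])
  thus ?thesis by (simp add: g_def image_image)
qed

lemma alpha_of_g: "alpha_of (g z) $ j = (q_of z $ j - (pi_of z $ j - cbar $ j) / c $ j) / tau $ j"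
  by (simp add: g_def Kinv_def vf_def)

lemma omega_of_g:
  "omega_of (g z) $ j = (q_of z - d - D *v omega_of z - C *v (B *v theta_of z)) $ j / M $ j $ j"
  by (simp add: g_def Kinv_def vf_def del: transpose_matrix_vector)

lemma eta_of_g: "eta_of (g z) $ e = proj_plus (y_of z) (eta_of z) $ e / Teta $ e $ e"
  by (simp add: g_def Kinv_def vf_def)

lemma continuous_on_alpha_of_g: "continuous_on S (\<lambda>z. alpha_of (g z) $ j)"
  unfolding alpha_of_g using c tau
  by (intro continuous_intros continuous_on_pi_of continuous_on_q_of) (auto simp: less_imp_neq[symmetric])

lemma continuous_on_omega_of_g: "continuous_on S (\<lambda>z. omega_of (g z) $ j)"
  unfolding omega_of_g using pos_diag_nonzero[OF M]
  by (intro continuous_intros continuous_on_q_of) auto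

end

section \<open>Convergence of trajectories\<close>

locale network_trajectory = network C B H F D M Tq Teta Tl \<rho> tau c cbar d
  for C :: "real^'e::finite^'n::finite" and B :: "real^'e^'e" and H :: "real^('e + 'e)^'n"
    and F :: "real^('e + 'e)" and D M Tq :: "real^'n^'n" and Teta :: "real^('e + 'e)^('e + 'e)"
    and Tl \<rho> :: real and tau c cbar d :: "real^'n" +
  fixes x :: "real \<Rightarrow> ('n, 'e) state" and p :: "('n, 'e) state"
  assumes solution: "cara_sol (Kop Tq Tl M tau Teta) vf x" and x0: "x 0 \<in> Iset"
    and p: "p \<in> equilibria"
begin

lemma x_eq_integral:
  assumes "0 \<le> t"
  shows "(\<lambda>s. g (x s)) integrable_on {0..t}" "x t = x 0 + integral {0..t} (\<lambda>s. g (x s))"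
proof -
  have "(\<lambda>s. vf (x s)) absolutely_integrable_on {0..t}"
    and eq: "K (x t) - K (x 0) = integral {0..t} (\<lambda>s. vf (x s))"
    using solution assms unfolding cara_sol_def by blast+
  then have int: "(\<lambda>s. vf (x s)) integrable_on {0..t}"
    unfolding absolutely_integrable_on_def by blast
  show "(\<lambda>s. g (x s)) integrable_on {0..t}"
    using integrable_linear[OF int bounded_linear_Kinv] by (simp add: o_def g_def)
  have "integral {0..t} (\<lambda>s. g (x s)) = Kinv (integral {0..t} (\<lambda>s. vf (x s)))"
    using integral_linear[OF int bounded_linear_Kinv] by (simp add: o_def g_def)
  also have "\<dots> = x t - x 0"
    unfolding eq[symmetric] linear_diff[OF bounded_linear.linear[OF bounded_linear_Kinv]]
    by (simp add: Kinv_K)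
  finally show "x t = x 0 + integral {0..t} (\<lambda>s. g (x s))" by simp
qed

lemma x_diff_integral:
  assumes "0 \<le> s" "s \<le> t"
  shows "(\<lambda>r. g (x r)) integrable_on {s..t}" "x t - x s = integral {s..t} (\<lambda>r. g (x r))"
proof -
  have gi: "(\<lambda>r. g (x r)) integrable_on {0..t}" using x_eq_integral(1) assms by simp
  show "(\<lambda>r. g (x r)) integrable_on {s..t}"
    by (rule integrable_subinterval_real[OF gi]) (use assms in auto)
  have "integral {0..s} (\<lambda>r. g (x r)) + integral {s..t} (\<lambda>r. g (x r)) = integral {0..t} (\<lambda>r. g (x r))"
    by (rule Henstock_Kurzweil_Integration.integral_combine) (use assms gi in auto)
  moreover have "x t - x s = integral {0..t} (\<lambda>r. g (x r)) - integral {0..s} (\<lambda>r. g (x r))"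
    using x_eq_integral(2)[of s] x_eq_integral(2)[of t] assms by simp
  ultimately show "x t - x s = integral {s..t} (\<lambda>r. g (x r))" by (metis add_diff_cancel_left')
qed

lemma linear_x_diff_integral:
  assumes l: "bounded_linear l" and st: "0 \<le> s" "s \<le> t"
  shows "(\<lambda>r. l (g (x r))) integrable_on {s..t} \<and> l (x t) - l (x s) = integral {s..t} (\<lambda>r. l (g (x r)))"
  using integrable_linear[OF x_diff_integral(1)[OF st] l] integral_linear[OF x_diff_integral(1)[OF st] l]
    x_diff_integral(2)[OF st] linear_diff[OF bounded_linear.linear[OF l], symmetric]
  by (simp add: o_def)

lemma continuous_on_x:
  assumes "0 \<le> b"
  shows "continuous_on {0..b} x"
proof (rule continuous_on_eq)
  show "continuous_on {0..b} (\<lambda>t. x 0 + integral {0..t} (\<lambda>s. g (x s)))"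
    by (intro continuous_intros indefinite_integral_continuous_1 x_eq_integral(1) assms)
  show "x 0 + integral {0..t} (\<lambda>s. g (x s)) = x t" if "t \<in> {0..b}" for t
    using x_eq_integral(2)[of t] that by simp
qed

lemma x_in_Iset: "0 \<le> t \<Longrightarrow> x t \<in> Iset"
  unfolding Iset_iff
proof
  fix e assume t: "0 \<le> t"
  show "eta_of (x t) $ e \<ge> 0"
  proof (rule integral_form_nonneg_invariant[OF t, where v = "\<lambda>r. eta_of (g (x r)) $ e"])
    show "continuous_on {0..t} (\<lambda>r. eta_of (x r) $ e)"
      by (intro continuous_intros continuous_on_x t)
    show "(\<lambda>r. eta_of (g (x r)) $ e) integrable_on {s..t'} \<and>
          eta_of (x t') $ e - eta_of (x s) $ e = integral {s..t'} (\<lambda>r. eta_of (g (x r)) $ e)"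
      if "0 \<le> s" "s \<le> t'" "t' \<le> t" for s t'
      using linear_x_diff_integral[OF bounded_linear_component(1) that(1,2)] .
    show "eta_of (g (x r)) $ e \<ge> 0" if "r \<in> {0..t}" "eta_of (x r) $ e \<le> 0" for r
      using that(2) Teta unfolding eta_of_g pos_diag_def
      by (auto simp: proj_plus_def intro: divide_nonneg_pos less_imp_le)
    show "eta_of (x 0) $ e \<ge> 0" using x0 by (simp add: Iset_iff)
  qed
qed


lemma g_bounded_on:
  assumes "0 \<le> b"
  shows "\<exists>G\<ge>0. \<forall>s\<in>{0..b}. norm (g (x s)) \<le> G"
proof -
  have "bounded (g ` x ` {0..b})"
    by (intro bounded_g_image compact_imp_bounded compact_continuous_image continuous_on_x assms compact_Icc)
  then show ?thesis unfolding bounded_pos by (auto intro: less_imp_le)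
qed

lemma integrable_W:
  assumes "0 \<le> a" "a \<le> b"
  shows "(\<lambda>s. W q (x s)) integrable_on {a..b}"
  using assms
  by (intro integrable_continuous_real continuous_on_compose2[OF continuous_on_W
        continuous_on_subset[OF continuous_on_x[of b]]]) auto

lemma lyapunov_decrease:
  assumes q: "q \<in> equilibria" and ab: "0 \<le> a" "a \<le> b"
  shows "V q (x b) + integral {a..b} (\<lambda>s. W q (x s)) \<le> V q (x a)"
proof -
  have "0 \<le> b" using ab by simp
  then obtain G where G: "G \<ge> 0" "\<forall>s\<in>{0..b}. norm (g (x s)) \<le> G"
    using g_bounded_on by blast
  show ?thesis
  proof (rule lyapunov_decrease_integral_form[where g = "\<lambda>s. g (x s)"
        and dV = "\<lambda>z v. inner (z - q) (P v)" and Cq = "P_norm / 2" and Lq = P_norm])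
    show "(\<lambda>s. g (x s)) integrable_on {a..b}" using x_diff_integral(1) ab .
    show "x t = x a + integral {a..t} (\<lambda>s. g (x s))" if "t \<in> {a..b}" for t
      using x_diff_integral(2)[of a t] that ab by (simp add: algebra_simps)
    show "norm (g (x s)) \<le> G" if "s \<in> {a..b}" for s using G(2) that ab by auto
    show "(\<lambda>s. W q (x s)) integrable_on {a..b}" by (rule integrable_W[OF ab])
    show "bounded_linear (\<lambda>v. inner (z - q) (P v))" for z
      by (rule bounded_linear_compose[OF bounded_linear_inner_right bounded_linear_P])
    show "V q (z + \<Delta>) \<le> V q z + inner (z - q) (P \<Delta>) + P_norm / 2 * (norm \<Delta>)\<^sup>2" for z \<Delta>
      using V_add[of q z \<Delta>] inner_P_le[of \<Delta>] by simp
    show "inner (z - q) (P v) - inner (z' - q) (P v) \<le> P_norm * norm (z - z') * norm v" for z z' v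
    proof -
      have "inner (z - q) (P v) - inner (z' - q) (P v) = inner (z - z') (P v)"
        by (simp add: inner_diff_left)
      also have "\<dots> \<le> norm (z - z') * norm (P v)" by (rule norm_cauchy_schwarz)
      also have "\<dots> \<le> norm (z - z') * (P_norm * norm v)" by (intro mult_left_mono norm_P_le) simp
      finally show ?thesis by (simp add: algebra_simps)
    qed
    show "inner (x s - q) (P (g (x s))) \<le> - W q (x s)" if "s \<in> {a..b}" for s
      using inner_P_g_le[OF q x_in_Iset] that ab by auto
  qed (use ab G P_norm_nonneg in auto)
qed

lemma V_antimono:
  assumes q: "q \<in> equilibria" and st: "0 \<le> s" "s \<le> t"
  shows "V q (x t) \<le> V q (x s)"
proof -
  have "integral {s..t} (\<lambda>r. W q (x r)) \<ge> 0"
    by (rule integral_nonneg[OF integrable_W[OF st]]) (rule W_nonneg)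
  thus ?thesis using lyapunov_decrease[OF q st] by simp
qed

lemma dist_le:
  assumes q: "q \<in> equilibria" and t: "0 \<le> t"
  shows "dist (x t) q \<le> sqrt (P_norm / P_min) * dist (x 0) q"
proof -
  have "P_min / 2 * (norm (x t - q))\<^sup>2 \<le> P_norm / 2 * (norm (x 0 - q))\<^sup>2"
    using V_ge[of "x t" q] V_antimono[OF q order_refl t] V_le[of q "x 0"] by linarith
  hence "(norm (x t - q))\<^sup>2 \<le> (P_norm / P_min) * (norm (x 0 - q))\<^sup>2"
    using P_min_pos by (simp add: pos_le_divide_eq mult.commute mult.left_commute)
  hence "sqrt ((norm (x t - q))\<^sup>2) \<le> sqrt ((P_norm / P_min) * (norm (x 0 - q))\<^sup>2)"
    by (rule real_sqrt_le_mono)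
  also have "\<dots> = sqrt (P_norm / P_min) * norm (x 0 - q)"
    by (simp only: real_sqrt_mult real_sqrt_abs abs_norm_cancel)
  finally show ?thesis by (simp add: dist_norm)
qed

lemma x_in_cball: "0 \<le> t \<Longrightarrow> x t \<in> cball p (sqrt (P_norm / P_min) * dist (x 0) p)"
  using dist_le[OF p] by (simp add: dist_commute)

lemma bounded_x: "bounded (x ` {0..})"
  using x_in_cball by (intro bounded_subset[OF bounded_cball]) blast

lemma lipschitz_x:
  obtains G where "G-lipschitz_on {0..} x"
proof -
  obtain G where G: "G > 0" "\<And>s. s \<ge> 0 \<Longrightarrow> norm (g (x s)) \<le> G"
    using bounded_g_image[OF bounded_x] unfolding bounded_pos by auto
  have le: "dist (x t) (x s) \<le> G * dist t s" if st: "0 \<le> s" "s \<le> t" for s t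
  proof -
    have "norm (integral {s..t} (\<lambda>r. g (x r))) \<le> G * (t - s)"
      using st G(2) by (intro norm_integral_le_length x_diff_integral) auto
    then show ?thesis using x_diff_integral(2)[OF st] st by (simp add: dist_norm dist_real_def)
  qed
  have "G-lipschitz_on {0..} x"
  proof (rule lipschitz_onI)
    show "dist (x s) (x t) \<le> G * dist s t" if "s \<in> {0..}" "t \<in> {0..}" for s t
      using le[of s t] le[of t s] that by (cases "s \<le> t") (auto simp: dist_commute)
  qed (use G in simp)
  then show ?thesis by (rule that)
qed

lemma uniformly_continuous_on_comp_x:
  fixes h :: "('n, 'e) state \<Rightarrow> 'b::metric_space"
  assumes "continuous_on UNIV h"
  shows "uniformly_continuous_on {0..} (\<lambda>t. h (x t))"
proof (rule uniformly_continuous_on_compose[where g = x and f = h])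
  obtain G where "G-lipschitz_on {0..} x" by (rule lipschitz_x)
  then show "uniformly_continuous_on {0..} x" by (rule lipschitz_on_uniformly_continuous)
  have "uniformly_continuous_on (cball p (sqrt (P_norm / P_min) * dist (x 0) p)) h"
    by (intro compact_uniformly_continuous compact_cball continuous_on_subset[OF assms subset_UNIV])
  then show "uniformly_continuous_on (x ` {0..}) h"
    by (rule uniformly_continuous_on_subset) (use x_in_cball in blast)
qed

lemma W_tendsto_0: "((\<lambda>t. W p (x t)) \<longlongrightarrow> 0) at_top"
proof -
  define I where "I t = integral {0..t} (\<lambda>s. W p (x s))" for t
  have I_diff: "(\<lambda>r. W p (x r)) integrable_on {s..t} \<and> I t - I s = integral {s..t} (\<lambda>r. W p (x r))"
    if st: "0 \<le> s" "s \<le> t" for s t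
  proof
    show "(\<lambda>r. W p (x r)) integrable_on {s..t}" by (rule integrable_W[OF st])
    have "integral {0..s} (\<lambda>r. W p (x r)) + integral {s..t} (\<lambda>r. W p (x r))
          = integral {0..t} (\<lambda>r. W p (x r))"
      by (rule Henstock_Kurzweil_Integration.integral_combine[OF st
            integrable_W[OF order_refl order_trans[OF st]]])
    then show "I t - I s = integral {s..t} (\<lambda>r. W p (x r))" unfolding I_def by linarith
  qed
  have mono: "I s \<le> I t" if st: "0 \<le> s" "s \<le> t" for s t
  proof -
    have "0 \<le> integral {s..t} (\<lambda>r. W p (x r))"
      by (rule integral_nonneg[OF integrable_W[OF st]]) (rule W_nonneg)
    then show ?thesis using I_diff[OF st] by linarith
  qed
  have bd: "I t \<le> V p (x 0)" if "0 \<le> t" for t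
    using lyapunov_decrease[OF p order_refl that] V_nonneg[of p "x t"] unfolding I_def by linarith
  from bounded_mono_tendsto_at_top[OF mono bd] obtain L where "(I \<longlongrightarrow> L) at_top" ..
  with I_diff uniformly_continuous_on_comp_x[OF continuous_on_W] show ?thesis by (rule barbalat)
qed

lemma tendsto_if_dominated_by_W:
  fixes f :: "('n, 'e) state \<Rightarrow> real"
  assumes "k > 0" "\<And>z. k * (f z - f p)\<^sup>2 \<le> W p z"
  shows "((\<lambda>t. f (x t)) \<longlongrightarrow> f p) at_top"
proof -
  have "((\<lambda>t. f (x t) - f p) \<longlongrightarrow> 0) at_top"
    by (rule tendsto_zero_if_square_dominated[where W = "\<lambda>t. W p (x t)", OF assms(1) _ W_tendsto_0])
      (use assms(2) in simp)
  then show ?thesis by (simp add: LIM_zero_iff)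
qed

lemma pi_tendsto: "((\<lambda>t. pi_of (x t) $ j) \<longlongrightarrow> pi_of p $ j) at_top"
  by (rule tendsto_if_dominated_by_W[where f = "\<lambda>z. pi_of z $ j", OF eps_pos]) (use W_ge(1) in simp)

lemma alpha_tendsto: "((\<lambda>t. alpha_of (x t) $ j) \<longlongrightarrow> alpha_of p $ j) at_top"
  by (rule tendsto_if_dominated_by_W[where f = "\<lambda>z. alpha_of z $ j", OF eps_pos]) (use W_ge(2) in simp)

lemma omega_tendsto: "((\<lambda>t. omega_of (x t) $ j) \<longlongrightarrow> omega_of p $ j) at_top"
proof (rule tendsto_if_dominated_by_W[where f = "\<lambda>z. omega_of z $ j"])
  show "D $ j $ j > 0" using D by (simp add: pos_diag_def)
qed (use W_ge(3) in simp)

lemma alpha_rate_tendsto_0: "((\<lambda>t. alpha_of (g (x t)) $ j) \<longlongrightarrow> 0) at_top"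
proof (rule barbalat[where h = "\<lambda>t. alpha_of (x t) $ j"])
  show "(\<lambda>r. alpha_of (g (x r)) $ j) integrable_on {s..t} \<and>
        alpha_of (x t) $ j - alpha_of (x s) $ j = integral {s..t} (\<lambda>r. alpha_of (g (x r)) $ j)"
    if "0 \<le> s" "s \<le> t" for s t
    using linear_x_diff_integral[OF bounded_linear_component(2) that] by simp
qed (intro uniformly_continuous_on_comp_x continuous_on_alpha_of_g, rule alpha_tendsto)

lemma omega_rate_tendsto_0: "((\<lambda>t. omega_of (g (x t)) $ j) \<longlongrightarrow> 0) at_top"
proof (rule barbalat[where h = "\<lambda>t. omega_of (x t) $ j"])
  show "(\<lambda>r. omega_of (g (x r)) $ j) integrable_on {s..t} \<and>
        omega_of (x t) $ j - omega_of (x s) $ j = integral {s..t} (\<lambda>r. omega_of (g (x r)) $ j)"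
    if "0 \<le> s" "s \<le> t" for s t
    using linear_x_diff_integral[OF bounded_linear_component(3) that] by simp
qed (intro uniformly_continuous_on_comp_x continuous_on_omega_of_g, rule omega_tendsto)

lemma q_of_eq: "q_of z $ j = tau $ j * alpha_of (g z) $ j + (pi_of z $ j - cbar $ j) / c $ j"
  using tau[of j] by (simp add: alpha_of_g)

lemma q_tendsto: "((\<lambda>t. q_of (x t) $ j) \<longlongrightarrow> q_of p $ j) at_top"
proof -
  have "((\<lambda>t. tau $ j * alpha_of (g (x t)) $ j + (pi_of (x t) $ j - cbar $ j) / c $ j)
          \<longlongrightarrow> tau $ j * 0 + (pi_of p $ j - cbar $ j) / c $ j) at_top"
    by (intro tendsto_intros alpha_rate_tendsto_0 pi_tendsto) (use c[of j] in simp)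
  moreover have "(\<lambda>t. q_of (x t) $ j)
      = (\<lambda>t. tau $ j * alpha_of (g (x t)) $ j + (pi_of (x t) $ j - cbar $ j) / c $ j)"
    by (simp add: q_of_eq)
  ultimately show ?thesis using equilibria_eqs(5)[OF p, of j] by simp
qed

lemma y_tendsto: "((\<lambda>t. y_of (x t) $ e) \<longlongrightarrow> y_of p $ e) at_top"
  unfolding y_of_def by (simp add: matrix_vector_mult_def del: transpose_matrix_vector)
    (intro tendsto_intros q_tendsto)

lemma eta_eventually_nonpos:
  assumes neg: "y_of p $ e < 0"
  shows "\<forall>\<^sub>F t in at_top. eta_of (x t) $ e \<le> 0"
proof -
  have Te: "Teta $ e $ e > 0" using Teta by (simp add: pos_diag_def)
  obtain T0 where T0: "\<And>t. t \<ge> T0 \<Longrightarrow> y_of (x t) $ e < y_of p $ e / 2"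
    using order_tendstoD(2)[OF y_tendsto[of e], of "y_of p $ e / 2"] neg
    unfolding eventually_at_top_linorder by auto
  show ?thesis
  proof (rule integral_form_eventually_nonpos[where T = "max T0 0" and v = "\<lambda>r. eta_of (g (x r)) $ e"
        and \<beta> = "- (y_of p $ e / 2) / Teta $ e $ e"])
    show "(\<lambda>r. eta_of (g (x r)) $ e) integrable_on {s..t} \<and>
          eta_of (x t) $ e - eta_of (x s) $ e = integral {s..t} (\<lambda>r. eta_of (g (x r)) $ e)"
      if "max T0 0 \<le> s" "s \<le> t" for s t
      using linear_x_diff_integral[OF bounded_linear_component(1) _ that(2)] that by simp
    show "eta_of (x t) $ e \<ge> 0" if "t \<ge> max T0 0" for t
      using x_in_Iset[of t] that by (simp add: Iset_iff)
    show "eta_of (g (x t)) $ e \<le> 0" if "t \<ge> max T0 0" for t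
    proof -
      have "y_of (x t) $ e < 0" using T0[of t] that neg by simp
      then show ?thesis using Te unfolding eta_of_g by (auto simp: proj_plus_def divide_nonpos_pos)
    qed
    show "eta_of (g (x t)) $ e \<le> - (- (y_of p $ e / 2) / Teta $ e $ e)"
      if "t \<ge> max T0 0" "eta_of (x t) $ e > 0" for t
    proof -
      have "y_of (x t) $ e / Teta $ e $ e \<le> (y_of p $ e / 2) / Teta $ e $ e"
        using T0[of t] that(1) Te by (intro divide_right_mono) auto
      then show ?thesis using that(2) unfolding eta_of_g by (simp add: proj_plus_def)
    qed
    show "- (y_of p $ e / 2) / Teta $ e $ e > 0" using neg Te by (simp add: field_simps)
  qed
qed

lemma limit_along_eq:
  fixes \<phi> :: "('n, 'e) state \<Rightarrow> 'b::t2_space"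
  assumes s: "filterlim s at_top sequentially" and xs: "(\<lambda>k. x (s k)) \<longlonglongrightarrow> z"
    and \<phi>: "continuous_on UNIV \<phi>" and lim: "((\<lambda>t. \<phi> (x t)) \<longlongrightarrow> L) at_top"
  shows "\<phi> z = L"
proof (rule LIMSEQ_unique)
  show "(\<lambda>k. \<phi> (x (s k))) \<longlonglongrightarrow> \<phi> z" using continuous_on_tendsto_compose[OF \<phi> xs] by simp
  show "(\<lambda>k. \<phi> (x (s k))) \<longlonglongrightarrow> L" using filterlim_compose[OF lim s] .
qed

lemma limit_in_Iset:
  assumes s: "filterlim s at_top sequentially" and xs: "(\<lambda>k. x (s k)) \<longlonglongrightarrow> z"
  shows "z \<in> Iset"
proof (rule Lim_in_closed_set[OF closed_Iset _ _ xs])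
  show "\<forall>\<^sub>F k in sequentially. x (s k) \<in> Iset"
    using eventually_compose_filterlim[OF eventually_ge_at_top[of 0] s] by (rule eventually_mono) (rule x_in_Iset)
qed simp

lemma limit_proj_plus_eq_0:
  assumes s: "filterlim s at_top sequentially" and xs: "(\<lambda>k. x (s k)) \<longlonglongrightarrow> z"
  shows "proj_plus (y_of p) (eta_of z) = 0"
proof -
  have eta: "eta_of z $ e \<le> 0" if "y_of p $ e < 0" for e
  proof (rule tendsto_upperbound)
    have "continuous_on UNIV (\<lambda>w::('n, 'e) state. eta_of w $ e)" by (intro continuous_intros)
    from continuous_on_tendsto_compose[OF this xs]
    show "(\<lambda>k. eta_of (x (s k)) $ e) \<longlonglongrightarrow> eta_of z $ e" by simp
    show "\<forall>\<^sub>F k in sequentially. eta_of (x (s k)) $ e \<le> 0"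
      by (rule eventually_compose_filterlim[OF eta_eventually_nonpos[OF that] s])
  qed simp
  have y_p: "y_of p $ e \<le> 0" for e
    using arg_cong[OF equilibria_eqs(6)[OF p], of "\<lambda>w. w $ e"] by (auto simp: proj_plus_def split: if_splits)
  have "proj_plus (y_of p) (eta_of z) $ e = 0" for e
    using eta[of e] y_p[of e] by (cases "y_of p $ e < 0") (auto simp: proj_plus_def)
  then show ?thesis by (simp add: vec_eq_iff)
qed

lemma limit_in_equilibria:
  assumes s: "filterlim s at_top sequentially" and xs: "(\<lambda>k. x (s k)) \<longlonglongrightarrow> z"
  shows "z \<in> equilibria"
proof -
  note lim = limit_along_eq[OF s xs]
  have pi: "pi_of z = pi_of p"
    using lim[OF continuous_on_component[OF continuous_on_pi_of] pi_tendsto] by (simp add: vec_eq_iff)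
  have alpha: "alpha_of z = alpha_of p"
    using lim[OF _ alpha_tendsto] by (simp add: vec_eq_iff continuous_intros)
  have omega: "omega_of z = omega_of p"
    using lim[OF _ omega_tendsto] by (simp add: vec_eq_iff continuous_intros)
  have alpha_rate: "alpha_of (g z) $ j = 0" for j
    by (rule lim[OF continuous_on_alpha_of_g alpha_rate_tendsto_0])
  have omega_rate: "omega_of (g z) $ j = 0" for j
    by (rule lim[OF continuous_on_omega_of_g omega_rate_tendsto_0])
  have q: "q_of z = q_of p"
    using q_of_eq[of z] alpha_rate pi equilibria_eqs(5)[OF p] by (simp add: vec_eq_iff)
  have "proj_plus (y_of z) (eta_of z) = 0"
    using limit_proj_plus_eq_0[OF s xs] by (simp add: y_of_def q)
  moreover have "q_of z - d - D *v omega_of z - C *v (B *v theta_of z) = 0"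
    using omega_rate pos_diag_nonzero[OF M] by (simp add: omega_of_g vec_eq_iff)
  moreover have "(\<chi> j. q_of z $ j - (pi_of z $ j - cbar $ j) / c $ j) = 0"
    using alpha_rate tau by (simp add: alpha_of_g vec_eq_iff less_imp_neq[symmetric])
  ultimately show ?thesis
    using p limit_in_Iset[OF s xs] pi alpha omega q equilibria_eqs(1)[OF p]
    by (simp add: equilibria_def vf_eq_0_iff)
qed

lemma converges_to_equilibrium:
  obtains z where "z \<in> equilibria" "(x \<longlongrightarrow> z) at_top"
proof -
  have "bounded (range (\<lambda>n::nat. x (real n)))" by (rule bounded_subset[OF bounded_x]) auto
  then obtain z r where r: "strict_mono r" and "((\<lambda>n. x (real n)) \<circ> r) \<longlonglongrightarrow> z"
    using bounded_imp_convergent_subsequence by blast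
  then have xr: "(\<lambda>k. x (real (r k))) \<longlonglongrightarrow> z" by (simp add: o_def)
  have s: "filterlim (\<lambda>k. real (r k)) at_top sequentially" by (rule filterlim_real_subseq_at_top[OF r])
  have z: "z \<in> equilibria" by (rule limit_in_equilibria[OF s xr])
  have "\<exists>L. ((\<lambda>t. - V z (x t)) \<longlongrightarrow> L) at_top"
    using V_antimono[OF z] V_nonneg[of z] by (intro bounded_mono_tendsto_at_top[where K = 0]) auto
  then obtain L where L: "((\<lambda>t. - V z (x t)) \<longlongrightarrow> L) at_top" by blast
  have "(\<lambda>k. - V z (x (real (r k)))) \<longlonglongrightarrow> - V z z"
    by (intro tendsto_minus continuous_on_tendsto_compose[OF continuous_on_V[of UNIV] xr]) auto
  then have "L = 0" using LIMSEQ_unique[OF filterlim_compose[OF L s]] by simp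
  then have V_lim: "((\<lambda>t. V z (x t)) \<longlongrightarrow> 0) at_top" using tendsto_minus[OF L] by simp
  have "((\<lambda>t. x t - z) \<longlongrightarrow> 0) at_top"
    using P_min_pos V_ge by (intro tendsto_zero_if_square_dominated[where k = "P_min / 2", OF _ _ V_lim]) auto
  then show ?thesis using that z by (simp add: LIM_zero_iff)
qed

end

context network
begin

lemma trajectory:
  assumes "cara_sol K vf x" "x 0 \<in> Iset" "q \<in> equilibria"
  shows "network_trajectory C B H F D M Tq Teta Tl \<rho> tau c cbar d x q"
  using assms by (intro network_trajectory.intro network_axioms network_trajectory_axioms.intro)

lemma equilibria_stable:
  assumes ne: "equilibria \<noteq> {}"
  shows "\<forall>\<epsilon>>0. \<exists>\<delta>>0. \<forall>x. cara_sol K vf x \<and> x 0 \<in> Iset \<and> infdist (x 0) equilibria < \<delta>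
           \<longrightarrow> (\<forall>t\<ge>0. infdist (x t) equilibria < \<epsilon>)"
proof (intro allI impI)
  fix \<epsilon> :: real assume e: "\<epsilon> > 0"
  define \<kappa> where "\<kappa> = sqrt (P_norm / P_min)"
  have \<kappa>: "\<kappa> \<ge> 0" unfolding \<kappa>_def using P_norm_nonneg P_min_pos by simp
  have bound: "infdist (x t) equilibria < \<epsilon>"
    if x: "cara_sol K vf x" "x 0 \<in> Iset" and x0: "infdist (x 0) equilibria < \<epsilon> / (\<kappa> + 1)"
      and t: "0 \<le> t" for x t
  proof -
    obtain q where q: "q \<in> equilibria" "dist (x 0) q < \<epsilon> / (\<kappa> + 1)" using infdist_lessE[OF x0 ne] .
    interpret network_trajectory C B H F D M Tq Teta Tl \<rho> tau c cbar d x q by (rule trajectory[OF x q(1)])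
    have "infdist (x t) equilibria \<le> dist (x t) q" by (rule infdist_le[OF q(1)])
    also have "\<dots> \<le> \<kappa> * dist (x 0) q" unfolding \<kappa>_def by (rule dist_le[OF q(1) t])
    also have "\<dots> \<le> \<kappa> * (\<epsilon> / (\<kappa> + 1))" using q(2) \<kappa> by (intro mult_left_mono) auto
    also have "\<dots> < \<epsilon>" using e \<kappa> by (simp add: field_simps)
    finally show ?thesis .
  qed
  show "\<exists>\<delta>>0. \<forall>x. cara_sol K vf x \<and> x 0 \<in> Iset \<and> infdist (x 0) equilibria < \<delta>
           \<longrightarrow> (\<forall>t\<ge>0. infdist (x t) equilibria < \<epsilon>)"
  proof (intro exI[of _ "\<epsilon> / (\<kappa> + 1)"] conjI allI impI)
    show "\<epsilon> / (\<kappa> + 1) > 0" using e \<kappa> by simp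
    fix x :: "real \<Rightarrow> ('n, 'e) state" and t :: real
    assume "cara_sol K vf x \<and> x 0 \<in> Iset \<and> infdist (x 0) equilibria < \<epsilon> / (\<kappa> + 1)" "0 \<le> t"
    then show "infdist (x t) equilibria < \<epsilon>" using bound by blast
  qed
qed

lemma trajectories_bounded_convergent:
  assumes "equilibria \<noteq> {}"
  shows "\<forall>x. cara_sol K vf x \<and> x 0 \<in> Iset \<longrightarrow>
           bounded (x ` {0..}) \<and> (\<exists>z\<in>equilibria. (x \<longlongrightarrow> z) at_top)"
proof (intro allI impI)
  fix x :: "real \<Rightarrow> ('n, 'e) state"
  assume x: "cara_sol K vf x \<and> x 0 \<in> Iset"
  obtain q where q: "q \<in> equilibria" using assms by blast
  interpret network_trajectory C B H F D M Tq Teta Tl \<rho> tau c cbar d x q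
    using trajectory x q by blast
  obtain z where "z \<in> equilibria" "(x \<longlongrightarrow> z) at_top" by (rule converges_to_equilibrium)
  with bounded_x show "bounded (x ` {0..}) \<and> (\<exists>z\<in>equilibria. (x \<longlongrightarrow> z) at_top)" by blast
qed

end

theorem theorem5:
  fixes src tgt :: "'e::finite \<Rightarrow> 'n::finite"
    and B :: "real^'e^'e" and D M Tq :: "real^'n^'n" and Teta :: "real^('e + 'e)^('e + 'e)"
    and Tl \<rho> :: real and tau c cbar d :: "real^'n" and Fup Flow :: "real^'e"
  assumes graph: "digraph_ok src tgt" and conn: "graph_connected src tgt"
    and B: "pos_diag B" and D: "pos_diag D" and M: "pos_diag M"
    and Tq: "pos_diag Tq" and Teta: "pos_diag Teta" and Tl: "Tl > 0"
    and tau: "\<forall>j. tau $ j > 0"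
    and c: "\<forall>j. c $ j > 0"
    and rho: "0 < \<rho>" "\<rho> < 4 * Min (range (\<lambda>j. c $ j))"
    and Enonempty: "{x \<in> Iset. rhs src tgt B D c cbar \<rho> d Fup Flow x = 0} \<noteq> {}"
  shows
    "let K = Kop Tq Tl M tau Teta; f = rhs src tgt B D c cbar \<rho> d Fup Flow;
         E = {x \<in> Iset. f x = 0}
     in
      (\<forall>\<epsilon>>0. \<exists>\<delta>>0. \<forall>x. cara_sol K f x \<and> x 0 \<in> Iset \<and> infdist (x 0) E < \<delta>
           \<longrightarrow> (\<forall>t\<ge>0. infdist (x t) E < \<epsilon>)) \<and>
      (\<forall>x. cara_sol K f x \<and> x 0 \<in> Iset \<longrightarrow>
           bounded (x ` {0..}) \<and>
           (\<exists>p\<in>E. (x \<longlongrightarrow> p) at_top))"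
proof -
  interpret network "incidence src tgt" B "Hmat (incidence src tgt) B" "Fvec Fup Flow"
      D M Tq Teta Tl \<rho> tau c cbar d
    using B D M Tq Teta Tl tau c rho by unfold_locales auto
  have f: "rhs src tgt B D c cbar \<rho> d Fup Flow = vf"
  proof
    fix z :: "('n, 'e) state"
    obtain qh th l om al et where "z = (qh, th, l, om, al, et)" by (metis prod.collapse)
    then show "rhs src tgt B D c cbar \<rho> d Fup Flow z = vf z"
      by (simp add: rhs_def vf_def pi_of_def q_of_def y_of_def Let_def)
  qed
  have E: "{x \<in> Iset. vf x = 0} = equilibria" by (simp add: equilibria_def)
  have ne: "equilibria \<noteq> {}" using Enonempty unfolding f E .
  show ?thesis
    unfolding Let_def f E using equilibria_stable[OF ne] trajectories_bounded_convergent[OF ne] by (rule conjI)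
qed

end
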